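(* Let $p,q\geq 3$, let $K_p$ be the complete graph on $p$ vertices and $C_q$ the cycle on $q$ vertices. Then $\mathrm{mbt}(K_p\Box C_q)\geq \Delta(K_p\Box C_q)+1$.
   Context: A book embedding of a graph $G$ consists of a linear ordering of $V(G)$ (the vertices placed on the spine) together with an assignment of each edge to one of a set of pages such that no two edges on the same page cross, i.e. there are no two edges $uv$, $xy$ on the same page with $u<x<v<y$ in the ordering. A book embedding is matching if on every page each vertex is incident with at most one edge of that page. The matching book thickness $\mathrm{mbt}(G)$ is the minimum number of pages over all matching book embeddings of $G$. $\Delta(G)$ denotes the maximum degree of $G$. The Cartesian product $G\Box B$ has vertex set $V(G)\times V(B)$, with $(u_1,v_1)$ adjacent to $(u_2,v_2)$ iff either $u_1=u_2$ and $v_1v_2\in E(B)$, or $v_1=v_2$ and $u_1u_2\in E(G)$. *)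

theory Defs
  imports Main
begin

text \<open>A (finite simple) graph is a pair (V, E) of a vertex set and a set of
  edges, each edge being a two-element subset of V.\<close>

type_synonym 'a graph = "'a set \<times> 'a set set"

definition verts :: "'a graph \<Rightarrow> 'a set" where "verts G = fst G"
definition edges :: "'a graph \<Rightarrow> 'a set set" where "edges G = snd G"

definition complete_graph :: "nat \<Rightarrow> nat graph" where
  "complete_graph p = ({0..<p}, {{i, j} | i j. i < p \<and> j < p \<and> i \<noteq> j})"

definition cycle_graph :: "nat \<Rightarrow> nat graph" where
  "cycle_graph q = ({0..<q}, {{i, (i + 1) mod q} | i. i < q})"

definition cart_prod :: "'a graph \<Rightarrow> 'b graph \<Rightarrow> ('a \<times> 'b) graph" (infixr "\<box>" 80) where
  "G \<box> B = (verts G \<times> verts B,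
     {{(u1, v), (u2, v)} | u1 u2 v. {u1, u2} \<in> edges G \<and> v \<in> verts B} \<union>
     {{(u, v1), (u, v2)} | u v1 v2. u \<in> verts G \<and> {v1, v2} \<in> edges B})"

definition degree :: "'a graph \<Rightarrow> 'a \<Rightarrow> nat" where
  "degree G v = card {e \<in> edges G. v \<in> e}"

definition max_degree :: "'a graph \<Rightarrow> nat" where
  "max_degree G = Max (degree G ` verts G)"

definition crossing :: "('a \<Rightarrow> nat) \<Rightarrow> 'a set \<Rightarrow> 'a set \<Rightarrow> bool" where
  "crossing ord e f \<longleftrightarrow> (\<exists>u v x y. e = {u, v} \<and> f = {x, y} \<and>
       ord u < ord x \<and> ord x < ord v \<and> ord v < ord y)"

definition matching_book_embedding ::
  "'a graph \<Rightarrow> nat \<Rightarrow> ('a \<Rightarrow> nat) \<Rightarrow> ('a set \<Rightarrow> nat) \<Rightarrow> bool" where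
  "matching_book_embedding G k ord pg \<longleftrightarrow>
     inj_on ord (verts G) \<and>
     (\<forall>e \<in> edges G. pg e < k) \<and>
     (\<forall>e \<in> edges G. \<forall>f \<in> edges G. pg e = pg f \<longrightarrow> \<not> crossing ord e f) \<and>
     (\<forall>e \<in> edges G. \<forall>f \<in> edges G. pg e = pg f \<and> e \<noteq> f \<longrightarrow> e \<inter> f = {})"

definition mbt :: "'a graph \<Rightarrow> nat" where
  "mbt G = (LEAST k. \<exists>ord pg. matching_book_embedding G k ord pg)"

end

theory Submission
  imports Defs
begin

text \<open>The graph \<open>K\<^sub>p \<box> C\<^sub>q\<close> is \<open>(p + 1)\<close>-regular and contains a triangle. In a matching
  book embedding with at most \<open>p + 1\<close> pages, the \<open>p + 1\<close> edges at a vertex lie on distinct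
  pages, so every page is a perfect matching. The vertices strictly between the endpoints
  of an edge on such a page are matched among themselves without crossing, so there is an
  even number of them; hence adjacent vertices have spine positions of opposite parity,
  which is impossible around a triangle.\<close>

definition simple_graph :: "'a graph \<Rightarrow> bool" where
  "simple_graph G \<longleftrightarrow> finite (verts G) \<and> (\<forall>e \<in> edges G. e \<subseteq> verts G \<and> card e = 2)"

lemma simple_graph_finite_edges: "simple_graph G \<Longrightarrow> finite (edges G)"
  unfolding simple_graph_def by (meson Pow_iff finite_Pow_iff finite_subset subsetI)

lemma simple_graph_edgeE:
  assumes "simple_graph G" "e \<in> edges G"
  obtains a b where "e = {a, b}" "a \<noteq> b" "a \<in> verts G" "b \<in> verts G"
proof -
  have "card e = 2" "e \<subseteq> verts G"
    using assms unfolding simple_graph_def by blast+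
  then show ?thesis
    using that unfolding card_2_iff by blast
qed

lemma not_crossing_self: "\<not> crossing ord e e"
  unfolding crossing_def by (auto simp: doubleton_eq_iff)

lemma matching_book_embedding_exists:
  assumes "finite (verts G)" "finite (edges G)"
  shows "\<exists>k ord pg. matching_book_embedding G k ord pg"
proof -
  obtain ord :: "'a \<Rightarrow> nat" where "inj_on ord (verts G)"
    using finite_imp_inj_to_nat_seg[OF assms(1)] by blast
  moreover obtain pg :: "'a set \<Rightarrow> nat" and k where "pg ` edges G = {i. i < k}" "inj_on pg (edges G)"
    using finite_imp_inj_to_nat_seg[OF assms(2)] by blast
  ultimately have "matching_book_embedding G k ord pg"
    unfolding matching_book_embedding_def by (auto simp: not_crossing_self inj_on_eq_iff)
  then show ?thesis by blast
qed

lemma mbt_attained: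
  assumes "simple_graph G"
  obtains ord pg where "matching_book_embedding G (mbt G) ord pg"
proof -
  have "\<exists>k ord pg. matching_book_embedding G k ord pg"
    using assms by (simp add: matching_book_embedding_exists simple_graph_finite_edges simple_graph_def)
  then have "\<exists>ord pg. matching_book_embedding G (mbt G) ord pg"
    unfolding mbt_def by (rule LeastI_ex)
  then show ?thesis using that by blast
qed

lemma matching_book_embedding_page_at_vertex:
  assumes mbe: "matching_book_embedding G k ord pg"
    and "k \<le> degree G v" and "c < k"
  shows "\<exists>e \<in> edges G. v \<in> e \<and> pg e = c"
proof -
  let ?Ev = "{e \<in> edges G. v \<in> e}"
  have "inj_on pg ?Ev"
    using mbe unfolding matching_book_embedding_def inj_on_def by blast
  then have "card (pg ` ?Ev) = degree G v"
    by (simp add: card_image degree_def)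
  moreover have "pg ` ?Ev \<subseteq> {..<k}"
    using mbe unfolding matching_book_embedding_def by auto
  ultimately have "pg ` ?Ev = {..<k}"
    using assms(2) by (intro card_seteq) simp_all
  then have "c \<in> pg ` ?Ev" using assms(3) by simp
  then show ?thesis by blast
qed

definition spine_rank :: "('a \<Rightarrow> nat) \<Rightarrow> 'a set \<Rightarrow> 'a \<Rightarrow> nat" where
  "spine_rank ord V w = card {z \<in> V. ord z < ord w}"

lemma page_edge_nested_between:
  assumes mbe: "matching_book_embedding G k ord pg"
    and e: "e \<in> edges G" "e = {u, v}" and f: "f \<in> edges G" "f = {x, y}" "pg f = pg e"
    and V: "e \<union> f \<subseteq> verts G" and x: "ord u < ord x" "ord x < ord v"
  shows "ord u < ord y \<and> ord y < ord v"
proof -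
  have "x \<notin> e" using x e(2) by auto
  then have "e \<inter> f = {}"
    using mbe e(1) f unfolding matching_book_embedding_def by blast
  then have "y \<noteq> u" "y \<noteq> v" using e(2) f(2) by auto
  moreover have "inj_on ord (verts G)"
    using mbe unfolding matching_book_embedding_def by blast
  ultimately have "ord y \<noteq> ord u" "ord y \<noteq> ord v"
    using V e(2) f(2) by (auto simp: inj_on_eq_iff)
  moreover have "\<not> crossing ord f e" "\<not> crossing ord e f"
    using mbe e(1) f(1,3) unfolding matching_book_embedding_def by auto
  moreover have "crossing ord f e" if "ord y < ord u"
    unfolding crossing_def using that x e(2) f(2)
    by (intro exI[of _ y] exI[of _ x] exI[of _ u] exI[of _ v]) (simp add: insert_commute)
  moreover have "crossing ord e f" if "ord v < ord y"
    unfolding crossing_def using that x e(2) f(2)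
    by (intro exI[of _ u] exI[of _ v] exI[of _ x] exI[of _ y]) simp
  ultimately show ?thesis by linarith
qed

lemma even_card_between_perfect_page_edge:
  assumes mbe: "matching_book_embedding G k ord pg" and simple: "simple_graph G"
    and perfect: "\<And>w. w \<in> verts G \<Longrightarrow> \<exists>f \<in> edges G. w \<in> f \<and> pg f = pg e"
    and e: "e \<in> edges G" "e = {u, v}" "ord u < ord v"
  shows "even (card {w \<in> verts G. ord u < ord w \<and> ord w < ord v})"
proof -
  define S where "S = {w \<in> verts G. ord u < ord w \<and> ord w < ord v}"
  define F where "F = {f \<in> edges G. pg f = pg e \<and> f \<inter> S \<noteq> {}}"
  have edge: "f \<subseteq> verts G" "card f = 2" "finite f" if "f \<in> edges G" for f
    using simple that unfolding simple_graph_def by (auto intro: finite_subset)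
  have "f \<subseteq> S" if "f \<in> F" for f
  proof -
    obtain a b where "f = {a, b}"
      using \<open>f \<in> F\<close> simple_graph_edgeE[OF simple] unfolding F_def by blast
    then have "(f = {a, b} \<and> a \<in> S) \<or> (f = {b, a} \<and> b \<in> S)"
      using \<open>f \<in> F\<close> unfolding F_def by auto
    then obtain x y where xy: "f = {x, y}" "x \<in> S" by blast
    have "ord u < ord y \<and> ord y < ord v"
      using page_edge_nested_between[OF mbe e(1,2), of f x y] \<open>f \<in> F\<close> edge(1) e(1) xy
      unfolding F_def S_def by blast
    then show ?thesis using xy \<open>f \<in> F\<close> edge(1) unfolding F_def S_def by auto
  qed
  moreover have "S \<subseteq> \<Union>F"
    using perfect unfolding F_def S_def by blast
  ultimately have "card S = card (\<Union>F)" by (metis Sup_least subset_antisym)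
  also have "\<dots> = sum card F"
    using mbe edge(3) unfolding F_def
    by (intro card_Union_disjoint) (auto simp: pairwise_def disjnt_def matching_book_embedding_def)
  also have "\<dots> = 2 * card F"
    using edge(2) unfolding F_def by simp
  finally show ?thesis unfolding S_def by simp
qed

lemma spine_rank_parity_perfect_page_edge:
  assumes mbe: "matching_book_embedding G k ord pg" and simple: "simple_graph G"
    and perfect: "\<And>w. w \<in> verts G \<Longrightarrow> \<exists>f \<in> edges G. w \<in> f \<and> pg f = pg e"
    and e: "e \<in> edges G" "e = {u, v}"
  shows "odd (spine_rank ord (verts G) u + spine_rank ord (verts G) v)"
proof -
  let ?r = "spine_rank ord (verts G)"
  have uv: "u \<in> verts G" "v \<in> verts G" "u \<noteq> v"
    using simple e unfolding simple_graph_def by auto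
  have inj: "inj_on ord (verts G)"
    using mbe unfolding matching_book_embedding_def by blast
  have ordered: "odd (?r a + ?r b)" if "e = {a, b}" "ord a < ord b" "a \<in> verts G" for a b
  proof -
    define S where "S = {w \<in> verts G. ord a < ord w \<and> ord w < ord b}"
    have fin: "finite (verts G)"
      using simple unfolding simple_graph_def by blast
    have "{z \<in> verts G. ord z < ord b} = {z \<in> verts G. ord z < ord a} \<union> insert a S"
      using that inj unfolding S_def inj_on_def by auto
    then have "?r b = card ({z \<in> verts G. ord z < ord a} \<union> insert a S)"
      unfolding spine_rank_def by simp
    also have "\<dots> = ?r a + card (insert a S)"
      unfolding spine_rank_def using fin by (intro card_Un_disjoint) (auto simp: S_def)
    also have "card (insert a S) = Suc (card S)"
      using fin by (simp add: S_def)
    finally have "?r b = ?r a + Suc (card S)" .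
    moreover have "even (card S)"
      using even_card_between_perfect_page_edge[OF mbe simple perfect e(1) that(1,2)]
      unfolding S_def .
    ultimately show ?thesis by simp
  qed
  have "ord u \<noteq> ord v" using inj uv unfolding inj_on_def by blast
  then consider "ord u < ord v" | "ord v < ord u" by linarith
  then show ?thesis
  proof cases
    case 1
    then show ?thesis using ordered[of u v] e(2) uv by simp
  next
    case 2
    then show ?thesis using ordered[of v u] e(2) uv by (simp add: insert_commute add.commute)
  qed
qed

lemma regular_triangle_pages_gt_degree:
  assumes mbe: "matching_book_embedding G k ord pg" and simple: "simple_graph G"
    and regular: "\<And>v. v \<in> verts G \<Longrightarrow> degree G v = d"
    and triangle: "{a, b} \<in> edges G" "{b, c} \<in> edges G" "{a, c} \<in> edges G"
  shows "d < k"
proof (rule ccontr)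
  assume "\<not> d < k"
  then have perfect: "\<exists>f \<in> edges G. w \<in> f \<and> pg f = pg e"
    if "w \<in> verts G" "e \<in> edges G" for w e
    using matching_book_embedding_page_at_vertex[OF mbe] mbe regular that
    unfolding matching_book_embedding_def by simp
  let ?r = "spine_rank ord (verts G)"
  have "odd (?r a + ?r b)" "odd (?r b + ?r c)" "odd (?r a + ?r c)"
    using spine_rank_parity_perfect_page_edge[OF mbe simple perfect] triangle by blast+
  then show False by presburger
qed

lemma mbt_gt_regular_triangle:
  assumes "simple_graph G" "\<And>v. v \<in> verts G \<Longrightarrow> degree G v = d"
    and "{a, b} \<in> edges G" "{b, c} \<in> edges G" "{a, c} \<in> edges G"
  shows "d < mbt G"
  using mbt_attained regular_triangle_pages_gt_degree assms by metis

lemma max_degree_regular: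
  assumes "verts G \<noteq> {}" "\<And>v. v \<in> verts G \<Longrightarrow> degree G v = d"
  shows "max_degree G = d"
proof -
  have "degree G ` verts G = {d}" using assms by auto
  then show ?thesis unfolding max_degree_def by simp
qed

lemma verts_cart_prod: "verts (G \<box> B) = verts G \<times> verts B"
  by (simp add: cart_prod_def verts_def)

lemma edges_cart_prod: "edges (G \<box> B) =
    {{(u1, v), (u2, v)} | u1 u2 v. {u1, u2} \<in> edges G \<and> v \<in> verts B} \<union>
    {{(u, v1), (u, v2)} | u v1 v2. u \<in> verts G \<and> {v1, v2} \<in> edges B}"
  by (simp add: cart_prod_def edges_def)

lemma edge_cart_prod_cases:
  assumes "e \<in> edges (G \<box> B)"
  obtains (layer) u1 u2 v where "e = (\<lambda>x. (x, v)) ` {u1, u2}" "{u1, u2} \<in> edges G" "v \<in> verts B"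
    | (fibre) u v1 v2 where "e = Pair u ` {v1, v2}" "u \<in> verts G" "{v1, v2} \<in> edges B"
  using assms unfolding edges_cart_prod by auto

lemma simple_graph_cart_prod:
  assumes G: "simple_graph G" and B: "simple_graph B"
  shows "simple_graph (G \<box> B)"
proof -
  have "e \<subseteq> verts (G \<box> B) \<and> card e = 2" if "e \<in> edges (G \<box> B)" for e
    using that
  proof (cases rule: edge_cart_prod_cases)
    case (layer u1 u2 v)
    then have "u1 \<noteq> u2"
      using G unfolding simple_graph_def by fastforce
    then show ?thesis
      using layer G unfolding simple_graph_def verts_cart_prod by auto
  next
    case (fibre u v1 v2)
    then have "v1 \<noteq> v2"
      using B unfolding simple_graph_def by fastforce
    then show ?thesis
      using fibre B unfolding simple_graph_def verts_cart_prod by auto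
  qed
  then show ?thesis
    using G B unfolding simple_graph_def verts_cart_prod by blast
qed

lemma layer_edge_cart_prod:
  assumes "simple_graph G" "e \<in> edges G" "v \<in> verts B"
  shows "(\<lambda>x. (x, v)) ` e \<in> edges (G \<box> B)"
proof -
  obtain a b where "e = {a, b}"
    using simple_graph_edgeE[OF assms(1) assms(2)] by blast
  then show ?thesis
    using assms(2,3) unfolding edges_cart_prod
    by (intro UnI1 CollectI exI[of _ a] exI[of _ b] exI[of _ v]) simp
qed

lemma fibre_edge_cart_prod:
  assumes "simple_graph B" "u \<in> verts G" "f \<in> edges B"
  shows "Pair u ` f \<in> edges (G \<box> B)"
proof -
  obtain a b where "f = {a, b}"
    using simple_graph_edgeE[OF assms(1) assms(3)] by blast
  then show ?thesis
    using assms(2,3) unfolding edges_cart_prod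
    by (intro UnI2 CollectI exI[of _ u] exI[of _ a] exI[of _ b]) simp
qed

lemma edges_at_cart_prod:
  assumes "simple_graph G" "simple_graph B" "u \<in> verts G" "v \<in> verts B"
  shows "{e \<in> edges (G \<box> B). (u, v) \<in> e} =
    (\<lambda>e. (\<lambda>x. (x, v)) ` e) ` {e \<in> edges G. u \<in> e} \<union> (\<lambda>f. Pair u ` f) ` {f \<in> edges B. v \<in> f}"
    (is "?E = ?H \<union> ?V")
proof
  show "?E \<subseteq> ?H \<union> ?V"
  proof
    fix e assume "e \<in> ?E"
    then have "e \<in> edges (G \<box> B)" "(u, v) \<in> e" by auto
    then show "e \<in> ?H \<union> ?V"
    proof (cases rule: edge_cart_prod_cases)
      case (layer u1 u2 v')
      then have "v' = v" "u \<in> {u1, u2}" using \<open>(u, v) \<in> e\<close> by auto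
      then show ?thesis using layer by (intro UnI1 image_eqI[of _ _ "{u1, u2}"]) auto
    next
      case (fibre u' v1 v2)
      then have "u' = u" "v \<in> {v1, v2}" using \<open>(u, v) \<in> e\<close> by auto
      then show ?thesis using fibre by (intro UnI2 image_eqI[of _ _ "{v1, v2}"]) auto
    qed
  qed
  show "?H \<union> ?V \<subseteq> ?E"
  proof
    fix e assume "e \<in> ?H \<union> ?V"
    then consider (layer) e' where "e = (\<lambda>x. (x, v)) ` e'" "e' \<in> edges G" "u \<in> e'"
      | (fibre) f where "e = Pair u ` f" "f \<in> edges B" "v \<in> f"
      by blast
    then show "e \<in> ?E"
    proof cases
      case layer
      then show ?thesis using layer_edge_cart_prod[OF assms(1) _ assms(4)] by blast
    next
      case fibre
      then show ?thesis using fibre_edge_cart_prod[OF assms(2) assms(3)] by blast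
    qed
  qed
qed

lemma degree_cart_prod:
  assumes "simple_graph G" "simple_graph B" "u \<in> verts G" "v \<in> verts B"
  shows "degree (G \<box> B) (u, v) = degree G u + degree B v"
proof -
  let ?H = "(\<lambda>e. (\<lambda>x. (x, v)) ` e) ` {e \<in> edges G. u \<in> e}"
  let ?V = "(\<lambda>f. Pair u ` f) ` {f \<in> edges B. v \<in> f}"
  have "card ?H = degree G u"
    unfolding degree_def by (rule card_image) (simp add: inj_on_def inj_image_eq_iff inj_def)
  moreover have "card ?V = degree B v"
    unfolding degree_def by (rule card_image) (simp add: inj_on_def inj_image_eq_iff inj_def)
  moreover have "(\<lambda>x. (x, v)) ` e \<noteq> Pair u ` f" if e: "e \<in> edges G" for e f
  proof -
    obtain a b where ab: "e = {a, b}" "a \<noteq> b"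
      using simple_graph_edgeE[OF assms(1) e] by blast
    show ?thesis
    proof
      assume "(\<lambda>x. (x, v)) ` e = Pair u ` f"
      then have "(a, v) \<in> Pair u ` f" "(b, v) \<in> Pair u ` f"
        using ab(1) by blast+
      then show False using ab(2) by auto
    qed
  qed
  then have "?H \<inter> ?V = {}" by blast
  moreover have "finite ?H" "finite ?V"
    using assms(1,2) by (simp_all add: simple_graph_finite_edges)
  ultimately show ?thesis
    unfolding degree_def edges_at_cart_prod[OF assms] by (simp add: card_Un_disjoint degree_def)
qed

lemma verts_complete_graph: "verts (complete_graph p) = {0..<p}"
  by (simp add: complete_graph_def verts_def)

lemma verts_cycle_graph: "verts (cycle_graph q) = {0..<q}"
  by (simp add: cycle_graph_def verts_def)

lemma simple_graph_complete_graph: "simple_graph (complete_graph p)"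
  unfolding simple_graph_def complete_graph_def verts_def edges_def by auto

lemma complete_graph_edge: "i < p \<Longrightarrow> j < p \<Longrightarrow> i \<noteq> j \<Longrightarrow> {i, j} \<in> edges (complete_graph p)"
  unfolding complete_graph_def edges_def by auto

lemma degree_complete_graph:
  assumes "i < p"
  shows "degree (complete_graph p) i = p - 1"
proof -
  have "{e \<in> edges (complete_graph p). i \<in> e} = (\<lambda>j. {i, j}) ` ({0..<p} - {i})"
    using assms unfolding complete_graph_def edges_def by auto blast
  moreover have "inj_on (\<lambda>j. {i, j}) ({0..<p} - {i})"
    by (auto simp: inj_on_def doubleton_eq_iff)
  ultimately show ?thesis
    using assms unfolding degree_def by (simp add: card_image)
qed

lemma simple_graph_cycle_graph:
  assumes "q \<ge> 2"
  shows "simple_graph (cycle_graph q)"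
  using assms unfolding simple_graph_def cycle_graph_def verts_def edges_def
  by (auto simp: mod_Suc)

lemma Suc_mod_eq_iff:
  fixes i j q :: nat
  assumes "i < q" "j < q"
  shows "Suc i mod q = j \<longleftrightarrow> i = (j + q - 1) mod q"
  using assms by (cases "j = 0") (auto simp: mod_Suc le_mod_geq)

lemma degree_cycle_graph:
  assumes "q \<ge> 3" "j < q"
  shows "degree (cycle_graph q) j = 2"
proof -
  define i where "i = (j + q - 1) mod q"
  have i: "i < q" "Suc i mod q = j"
    using assms Suc_mod_eq_iff[of i q j] by (simp_all add: i_def)
  have "{e \<in> edges (cycle_graph q). j \<in> e} = {{j, Suc j mod q}, {i, Suc i mod q}}"
  proof (intro set_eqI iffI)
    fix e assume "e \<in> {e \<in> edges (cycle_graph q). j \<in> e}"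
    then obtain k where k: "e = {k, Suc k mod q}" "k < q" "j \<in> e"
      unfolding cycle_graph_def edges_def by auto
    then have "k = j \<or> k = i"
      using Suc_mod_eq_iff[OF k(2) assms(2)] unfolding i_def by auto
    then show "e \<in> {{j, Suc j mod q}, {i, Suc i mod q}}" using k(1) by auto
  next
    fix e assume "e \<in> {{j, Suc j mod q}, {i, Suc i mod q}}"
    then consider "e = {j, Suc j mod q}" | "e = {i, Suc i mod q}" by blast
    then show "e \<in> {e \<in> edges (cycle_graph q). j \<in> e}"
      using assms(2) i unfolding cycle_graph_def edges_def by cases auto
  qed
  moreover have "{j, Suc j mod q} \<noteq> {i, Suc i mod q}"
  proof -
    have "i = (if j = 0 then q - 1 else j - 1)"
      using assms by (auto simp: i_def le_mod_geq)
    moreover have "Suc j mod q = (if Suc j = q then 0 else Suc j)"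
      using assms by (simp add: mod_Suc)
    ultimately have "i \<noteq> j" "Suc j mod q \<noteq> i" using assms by auto
    then show ?thesis using i(2) by (auto simp: doubleton_eq_iff)
  qed
  ultimately show ?thesis
    unfolding degree_def by simp
qed

lemma degree_complete_graph_cart_prod_cycle_graph:
  assumes "q \<ge> 3" "v \<in> verts (complete_graph p \<box> cycle_graph q)"
  shows "degree (complete_graph p \<box> cycle_graph q) v = p + 1"
  using assms
  by (auto simp: verts_cart_prod verts_complete_graph verts_cycle_graph degree_complete_graph
      degree_cycle_graph degree_cart_prod simple_graph_complete_graph simple_graph_cycle_graph)

lemma complete_graph_cart_prod_layer_edge:
  assumes "i < p" "j < p" "i \<noteq> j" "v \<in> verts B"
  shows "{(i, v), (j, v)} \<in> edges (complete_graph p \<box> B)"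
  using layer_edge_cart_prod[OF simple_graph_complete_graph complete_graph_edge[OF assms(1-3)] assms(4)]
  by simp

theorem lemma2p2:
  fixes p q :: nat
  assumes "p \<ge> 3" and "q \<ge> 3"
  shows "mbt (complete_graph p \<box> cycle_graph q) \<ge> max_degree (complete_graph p \<box> cycle_graph q) + 1"
proof -
  let ?G = "complete_graph p \<box> cycle_graph q"
  have simple: "simple_graph ?G"
    using assms(2) by (simp add: simple_graph_cart_prod simple_graph_complete_graph simple_graph_cycle_graph)
  have regular: "\<And>v. v \<in> verts ?G \<Longrightarrow> degree ?G v = p + 1"
    using degree_complete_graph_cart_prod_cycle_graph[OF assms(2)] .
  have "0 \<in> verts (cycle_graph q)"
    using assms(2) by (simp add: verts_cycle_graph)
  then have triangle: "{(0, 0), (1, 0)} \<in> edges ?G" "{(1, 0), (2, 0)} \<in> edges ?G" "{(0, 0), (2, 0)} \<in> edges ?G"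
    using assms(1) by (simp_all add: complete_graph_cart_prod_layer_edge)
  have "p + 1 < mbt ?G"
    using mbt_gt_regular_triangle[OF simple regular triangle] .
  moreover have "max_degree ?G = p + 1"
    using assms regular
    by (intro max_degree_regular) (auto simp: verts_cart_prod verts_complete_graph verts_cycle_graph)
  ultimately show ?thesis by simp
qed

end
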